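(* Let $n\ge3$, $\ell>0$, $\alpha\ge(n-2)\ell$, $S=\alpha I_n+\ell\mathbf{1}_n\mathbf{1}_n^\top$, and let $P\ne0$ be a real symmetric diagonally dominant $n\times n$ matrix with nonnegative entries. Let $Q=S^{-1}PS^{-1}$. Then $Q_{ii}-\sum_{j\ne i}Q_{ij}>0$ for every $i=1,\dots,n$.
   Context: For a real matrix $P$, $\Delta_i(P)=|P_{ii}|-\sum_{j\ne i}|P_{ij}|$; $P$ is diagonally dominant if $\Delta_i(P)\ge0$ for all $i$. *)

theory Defs
  imports "HOL-Analysis.Analysis"
begin

definition dd_margin :: "real^'n^'n \<Rightarrow> 'n \<Rightarrow> real" where
  "dd_margin P i = \<bar>P $ i $ i\<bar> - (\<Sum>j\<in>UNIV - {i}. \<bar>P $ i $ j\<bar>)"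

definition diag_dominant :: "real^'n^'n \<Rightarrow> bool" where
  "diag_dominant P \<longleftrightarrow> (\<forall>i. dd_margin P i \<ge> 0)"

definition ones_mat :: "real^'n^'n" where
  "ones_mat = (\<chi> i j. 1)"

end

theory Submission
  imports Defs
begin

(* Let N = CARD('n), J = ones_mat, and write r_i for the row sums and s for the sum of all
   entries of P.  Matrices x I - y J form a commutative algebra (J J = N J), which shows that
   S = \<alpha> I + l J has the inverse T = a I - b J with a = 1/\<alpha> and b = l / (\<alpha> (\<alpha> + N l)).
   For symmetric P the entries of T P T are a^2 P_ij - a b (r_i + r_j) + b^2 s, so the row excess
   Q_ii - \<Sum>_{j\<noteq>i} Q_ij of Q = T P T equals
       a^2 (p - q) + a b (N - 4) (p + q) + b (a - (N - 2) b) s,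
   where p = P_ii and q = \<Sum>_{j\<noteq>i} P_ij.  For nonnegative, symmetric, diagonally dominant
   P \<noteq> 0 one has 0 \<le> q \<le> p, s \<ge> p + 2q and s > 0, while \<alpha> \<ge> (N - 2) l amounts to
   a \<ge> (2N - 2) b; an elementary inequality (valid for every real N \<ge> 3) then makes the
   expression positive. *)

definition row_sum :: "real^'n^'n \<Rightarrow> 'n \<Rightarrow> real" where
  "row_sum A i = (\<Sum>k\<in>UNIV. A $ i $ k)"

definition entry_sum :: "real^'n^'n \<Rightarrow> real" where
  "entry_sum A = (\<Sum>i\<in>UNIV. row_sum A i)"

definition row_excess :: "real^'n^'n \<Rightarrow> 'n \<Rightarrow> real" where
  "row_excess A i = A $ i $ i - (\<Sum>j\<in>UNIV - {i}. A $ i $ j)"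

text \<open>A two-sided inverse is the inverse: the library defines \<open>matrix_inv\<close> by choice only.\<close>

lemma matrix_inv_eqI:
  fixes S :: "'a::semiring_1^'n^'m" and T :: "'a^'m^'n"
  assumes ST: "S ** T = mat 1" and TS: "T ** S = mat 1"
  shows "matrix_inv S = T"
proof -
  have "S ** matrix_inv S = mat 1 \<and> matrix_inv S ** S = mat 1"
    unfolding matrix_inv_def by (rule someI[of _ T]) (use assms in simp)
  then have "matrix_inv S = matrix_inv S ** (S ** T)" and "matrix_inv S ** S = mat 1"
    using ST by simp_all
  then show ?thesis by (simp add: matrix_mul_assoc)
qed

lemma identity_ones_entry:
  "(x *\<^sub>R mat 1 - y *\<^sub>R ones_mat :: real^'n^'n) $ i $ k = (if i = k then x else 0) - y"
  by (simp add: ones_mat_def mat_def)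

lemma identity_ones_mult_left:
  fixes A :: "real^'n^'n"
  shows "((x *\<^sub>R mat 1 - y *\<^sub>R ones_mat) ** A) $ i $ j = x * A $ i $ j - y * row_sum (transpose A) j"
proof -
  have "((x *\<^sub>R mat 1 - y *\<^sub>R ones_mat) ** A) $ i $ j
      = (\<Sum>k\<in>UNIV. (if i = k then x * A $ k $ j else 0) - y * A $ k $ j)"
    unfolding matrix_matrix_mult_def identity_ones_entry vec_lambda_beta
    by (intro sum.cong) (auto simp: left_diff_distrib)
  then show ?thesis by (simp add: sum_subtractf row_sum_def transpose_def sum_distrib_left)
qed

lemma identity_ones_mult_right:
  fixes A :: "real^'n^'n"
  shows "(A ** (x *\<^sub>R mat 1 - y *\<^sub>R ones_mat)) $ i $ j = x * A $ i $ j - y * row_sum A i"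
proof -
  have "(A ** (x *\<^sub>R mat 1 - y *\<^sub>R ones_mat)) $ i $ j
      = (\<Sum>k\<in>UNIV. (if k = j then x * A $ i $ k else 0) - y * A $ i $ k)"
    unfolding matrix_matrix_mult_def identity_ones_entry vec_lambda_beta
    by (intro sum.cong) (auto simp: right_diff_distrib)
  then show ?thesis by (simp add: sum_subtractf row_sum_def sum_distrib_left)
qed

lemma row_sum_identity_ones:
  "row_sum (x *\<^sub>R mat 1 - y *\<^sub>R ones_mat :: real^'n^'n) i = x - real CARD('n) * y"
  unfolding row_sum_def identity_ones_entry by (simp add: sum_subtractf)

lemma identity_ones_mult:
  "(x *\<^sub>R mat 1 - y *\<^sub>R ones_mat) ** (u *\<^sub>R mat 1 - v *\<^sub>R ones_mat)
     = (x * u) *\<^sub>R mat 1 - (x * v + y * u - real CARD('n) * y * v) *\<^sub>R (ones_mat :: real^'n^'n)"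
  unfolding vec_eq_iff identity_ones_mult_right row_sum_identity_ones identity_ones_entry
  by (simp add: algebra_simps)

text \<open>The inverse of \<alpha> I + l J (Sherman--Morrison for the rank-one matrix l J).\<close>

lemma inverse_identity_plus_ones:
  fixes \<alpha> l :: real
  defines "N \<equiv> real CARD('n)"
  assumes "\<alpha> \<noteq> 0" and "\<alpha> + N * l \<noteq> 0"
  shows "matrix_inv (\<alpha> *\<^sub>R mat 1 + l *\<^sub>R ones_mat :: real^'n^'n)
           = (1 / \<alpha>) *\<^sub>R mat 1 - (l / (\<alpha> * (\<alpha> + N * l))) *\<^sub>R ones_mat"
proof -
  define b where "b = l / (\<alpha> * (\<alpha> + N * l))"
  have S: "\<alpha> *\<^sub>R mat 1 + l *\<^sub>R ones_mat = \<alpha> *\<^sub>R mat 1 - (- l) *\<^sub>R (ones_mat :: real^'n^'n)"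
    by simp
  have "b * (\<alpha> + N * l) = l / \<alpha>"
    unfolding b_def using assms(3) by simp
  then have b_eq: "\<alpha> * b + N * (l * b) = l / \<alpha>" by (simp add: algebra_simps)
  \<comment> \<open>the coefficients of J in the two products S T and T S vanish\<close>
  have right: "\<alpha> * b + - l * (1 / \<alpha>) - N * - l * b = 0"
    and left: "1 / \<alpha> * - l + b * \<alpha> - N * b * - l = 0"
    using b_eq by (simp_all add: algebra_simps)
  have "matrix_inv (\<alpha> *\<^sub>R mat 1 + l *\<^sub>R ones_mat) = (1 / \<alpha>) *\<^sub>R mat 1 - b *\<^sub>R (ones_mat :: real^'n^'n)"
  proof (rule matrix_inv_eqI)
    show "(\<alpha> *\<^sub>R mat 1 + l *\<^sub>R ones_mat) ** ((1 / \<alpha>) *\<^sub>R mat 1 - b *\<^sub>R ones_mat) = (mat 1 :: real^'n^'n)"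
      unfolding S identity_ones_mult N_def[symmetric] right using assms(2) by simp
    show "((1 / \<alpha>) *\<^sub>R mat 1 - b *\<^sub>R ones_mat) ** (\<alpha> *\<^sub>R mat 1 + l *\<^sub>R ones_mat) = (mat 1 :: real^'n^'n)"
      unfolding S identity_ones_mult N_def[symmetric] left using assms(2) by simp
  qed
  then show ?thesis unfolding b_def .
qed

lemma row_sum_split: "row_sum A i = A $ i $ i + (\<Sum>j\<in>UNIV - {i}. A $ i $ j)"
  unfolding row_sum_def by (rule sum.remove) simp_all

lemma entry_sum_split: "entry_sum A = row_sum A i + (\<Sum>j\<in>UNIV - {i}. row_sum A j)"
  unfolding entry_sum_def by (rule sum.remove) simp_all

text \<open>Entries of T P T for T = a I - b J and symmetric P (column sums equal row sums).\<close>

lemma sandwich_entry: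
  fixes P :: "real^'n^'n"
  assumes "transpose P = P"
  shows "((a *\<^sub>R mat 1 - b *\<^sub>R ones_mat) ** P ** (a *\<^sub>R mat 1 - b *\<^sub>R ones_mat)) $ i $ j
           = a\<^sup>2 * P $ i $ j - a * b * (row_sum P i + row_sum P j) + b\<^sup>2 * entry_sum P"
proof -
  let ?T = "a *\<^sub>R mat 1 - b *\<^sub>R (ones_mat :: real^'n^'n)"
  have TP: "(?T ** P) $ i $ k = a * P $ i $ k - b * row_sum P k" for i k
    using assms by (simp add: identity_ones_mult_left)
  have TP_row: "row_sum (?T ** P) i = a * row_sum P i - b * entry_sum P"
    unfolding row_sum_def[of "?T ** P"] TP
    by (simp add: sum_subtractf sum_distrib_left row_sum_def entry_sum_def)
  then show ?thesis
    unfolding identity_ones_mult_right TP TP_row by (simp add: algebra_simps power2_eq_square)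
qed

lemma row_excess_sandwich:
  fixes P :: "real^'n^'n"
  defines "N \<equiv> real CARD('n)"
  assumes "transpose P = P"
  shows "row_excess ((a *\<^sub>R mat 1 - b *\<^sub>R ones_mat) ** P ** (a *\<^sub>R mat 1 - b *\<^sub>R ones_mat)) i
           = a\<^sup>2 * row_excess P i + a * b * (N - 4) * row_sum P i + b * (a - (N - 2) * b) * entry_sum P"
proof -
  have card: "real (card (UNIV - {i})) = N - 1"
    unfolding N_def by (simp add: card_Diff_singleton of_nat_diff)
  have "(\<Sum>j\<in>UNIV - {i}. a\<^sup>2 * P $ i $ j - a * b * (row_sum P i + row_sum P j) + b\<^sup>2 * entry_sum P)
      = a\<^sup>2 * (\<Sum>j\<in>UNIV - {i}. P $ i $ j)
        - a * b * ((N - 1) * row_sum P i + (\<Sum>j\<in>UNIV - {i}. row_sum P j))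
        + (N - 1) * b\<^sup>2 * entry_sum P"
    using card by (simp add: sum.distrib sum_subtractf sum_distrib_left distrib_left)
  then show ?thesis
    unfolding row_excess_def sandwich_entry[OF assms(2)]
    using row_sum_split[of P i] entry_sum_split[of P i]
    by (simp add: algebra_simps power2_eq_square)
qed

lemma row_excess_eq_dd_margin:
  assumes "\<forall>i j. A $ i $ j \<ge> 0"
  shows "row_excess A i = dd_margin A i"
  using assms unfolding row_excess_def dd_margin_def by simp

text \<open>For symmetric nonnegative P the total sum contains row i and, by symmetry, a second copy
  of its off-diagonal part (inside the other rows); this gives s \<ge> p + 2q.\<close>

lemma entry_sum_lower_bound:
  fixes P :: "real^'n^'n"
  assumes sym: "transpose P = P" and nonneg: "\<forall>i j. P $ i $ j \<ge> 0"
  shows "row_sum P i + (\<Sum>j\<in>UNIV - {i}. P $ i $ j) \<le> entry_sum P"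
proof -
  have "(\<Sum>j\<in>UNIV - {i}. P $ i $ j) = (\<Sum>j\<in>UNIV - {i}. P $ j $ i)"
    using sym by (metis transpose_def vec_lambda_beta)
  also have "\<dots> \<le> (\<Sum>j\<in>UNIV - {i}. row_sum P j)"
    unfolding row_sum_def using nonneg by (intro sum_mono member_le_sum) auto
  finally show ?thesis using entry_sum_split[of P i] by linarith
qed

lemma entry_sum_pos:
  fixes P :: "real^'n^'n"
  assumes "P \<noteq> 0" and nonneg: "\<forall>i j. P $ i $ j \<ge> 0"
  shows "0 < entry_sum P"
proof -
  obtain i j where "P $ i $ j \<noteq> 0" using assms(1) by (metis vec_eq_iff zero_index)
  then have "0 < P $ i $ j" using nonneg by (simp add: order_less_le)
  also have "\<dots> \<le> row_sum P i"
    unfolding row_sum_def using nonneg by (intro member_le_sum) auto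
  also have "\<dots> \<le> entry_sum P"
    unfolding entry_sum_def row_sum_def using nonneg by (intro member_le_sum sum_nonneg) auto
  finally show ?thesis .
qed

text \<open>It is linear in s with positive slope, so it
  suffices to look at s = p + 2q, where it is a nonnegative combination of p - q and q with
  positive weights; the degenerate case p = q = 0 is covered by s > 0.\<close>

lemma sandwich_excess_pos:
  fixes a b N p q s :: real
  assumes b: "b > 0" and N: "N \<ge> 3" and ab: "(2 * N - 2) * b \<le> a"
    and q: "0 \<le> q" and pq: "q \<le> p" and s: "p + 2 * q \<le> s" and s_pos: "0 < s"
  shows "0 < a\<^sup>2 * (p - q) + a * b * (N - 4) * (p + q) + b * (a - (N - 2) * b) * s"
proof -
  define c where "c = a - (N - 2) * b"
  have "(N - 2) * b < (2 * N - 2) * b"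
    using b N by (intro mult_strict_right_mono) auto
  then have a_big: "(N - 2) * b < a" using ab by linarith
  then have c_pos: "0 < c" unfolding c_def by simp
  \<comment> \<open>the expression at the smallest admissible total s = p + 2q, split along p - q and q\<close>
  define K\<^sub>1 where "K\<^sub>1 = a\<^sup>2 + a * b * (N - 3) - (N - 2) * b\<^sup>2"
  define K\<^sub>2 where "K\<^sub>2 = a * b * (2 * N - 5) - 3 * (N - 2) * b\<^sup>2"
  have K1_pos: "0 < K\<^sub>1"
  proof -
    have "b \<le> (N - 2) * b" using mult_right_mono[of 1 "N - 2" b] b N by simp
    then have "b \<le> a" using a_big by linarith
    then have "(N - 2) * b * b \<le> (N - 2) * b * a" using b N by (intro mult_left_mono) auto
    also have "\<dots> < a * a" using a_big b \<open>b \<le> a\<close> by (intro mult_strict_right_mono) auto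
    finally have "(N - 2) * b\<^sup>2 < a\<^sup>2" by (simp add: power2_eq_square mult.assoc)
    moreover have "0 \<le> a * b * (N - 3)" using \<open>b \<le> a\<close> b N by simp
    ultimately show ?thesis unfolding K\<^sub>1_def by linarith
  qed
  have K2_pos: "0 < K\<^sub>2"
  proof -
    have "0 \<le> (N - 3) * (4 * N - 5)" using N by simp
    then have "3 * (N - 2) < (2 * N - 2) * (2 * N - 5)" by (simp add: algebra_simps)
    then have "3 * (N - 2) * b\<^sup>2 < (2 * N - 2) * b * (b * (2 * N - 5))"
      using b by (simp add: power2_eq_square)
    also have "\<dots> \<le> a * (b * (2 * N - 5))"
      using ab b N by (intro mult_right_mono) auto
    finally show ?thesis unfolding K\<^sub>2_def by (simp add: algebra_simps)
  qed
  have "0 < (p - q) * K\<^sub>1 + q * K\<^sub>2 + b * c * (s - p - 2 * q)"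
  proof (cases "p = 0")
    case True
    then have "q = 0" using q pq by simp
    then show ?thesis using True b c_pos s_pos by simp
  next
    case False
    then have "0 < (p - q) * K\<^sub>1 + q * K\<^sub>2"
      using q pq K1_pos K2_pos
      by (smt (verit) mult_pos_pos mult_nonneg_nonneg)
    moreover have "0 \<le> b * c * (s - p - 2 * q)" using b c_pos s by simp
    ultimately show ?thesis by linarith
  qed
  also have "(p - q) * K\<^sub>1 + q * K\<^sub>2 + b * c * (s - p - 2 * q)
      = a\<^sup>2 * (p - q) + a * b * (N - 4) * (p + q) + b * (a - (N - 2) * b) * s"
    unfolding K\<^sub>1_def K\<^sub>2_def c_def by (simp add: algebra_simps power2_eq_square)
  finally show ?thesis .
qed

lemma sandwich_row_excess_pos:
  fixes P :: "real^'n^'n"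
  defines "N \<equiv> real CARD('n)"
  assumes N: "3 \<le> N" and b: "0 < b" and ab: "(2 * N - 2) * b \<le> a"
    and nonzero: "P \<noteq> 0" and sym: "transpose P = P" and dd: "diag_dominant P"
    and nonneg: "\<forall>i j. P $ i $ j \<ge> 0"
  shows "0 < row_excess ((a *\<^sub>R mat 1 - b *\<^sub>R ones_mat) ** P ** (a *\<^sub>R mat 1 - b *\<^sub>R ones_mat)) i"
proof -
  let ?p = "P $ i $ i" and ?q = "\<Sum>j\<in>UNIV - {i}. P $ i $ j"
  have excess_P: "row_excess P i = ?p - ?q" unfolding row_excess_def ..
  have "0 \<le> ?q" using nonneg by (simp add: sum_nonneg)
  moreover have "?q \<le> ?p"
    using dd row_excess_eq_dd_margin[OF nonneg, of i] excess_P
    unfolding diag_dominant_def by (metis diff_ge_0_iff_ge)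
  moreover have "?p + 2 * ?q \<le> entry_sum P"
    using entry_sum_lower_bound[OF sym nonneg, of i] row_sum_split[of P i] by linarith
  ultimately have "0 < a\<^sup>2 * (?p - ?q) + a * b * (N - 4) * (?p + ?q) + b * (a - (N - 2) * b) * entry_sum P"
    using sandwich_excess_pos[OF b N ab] entry_sum_pos[OF nonzero nonneg] by simp
  then show ?thesis
    using row_excess_sandwich[OF sym, of a b i] excess_P row_sum_split[of P i]
    unfolding N_def by simp
qed

theorem proposition5p4:
  fixes P :: "real^'n^'n" and l \<alpha> :: real
  assumes "CARD('n) \<ge> 3"
    and "l > 0"
    and "\<alpha> \<ge> (real CARD('n) - 2) * l"
    and "P \<noteq> 0"
    and "transpose P = P"
    and "diag_dominant P"
    and "\<forall>i j. P $ i $ j \<ge> 0"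
  shows "let S = \<alpha> *\<^sub>R mat 1 + l *\<^sub>R ones_mat;
             Q = matrix_inv S ** P ** matrix_inv S
         in \<forall>i. Q $ i $ i - (\<Sum>j\<in>UNIV - {i}. Q $ i $ j) > 0"
proof -
  define N where "N = real CARD('n)"
  define a where "a = 1 / \<alpha>"
  define b where "b = l / (\<alpha> * (\<alpha> + N * l))"
  have N: "3 \<le> N" using assms(1) unfolding N_def by simp
  have "0 < (N - 2) * l" and "0 < N * l" using N assms(2) by simp_all
  then have \<alpha>: "0 < \<alpha>" and \<alpha>N: "0 < \<alpha> + N * l" using assms(3) unfolding N_def by linarith+
  have b: "0 < b" unfolding b_def using \<alpha> \<alpha>N assms(2) by simp
  have "(2 * N - 2) * l \<le> \<alpha> + N * l" using assms(3) unfolding N_def by (simp add: algebra_simps)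
  then have "(2 * N - 2) * l / (\<alpha> * (\<alpha> + N * l)) \<le> (\<alpha> + N * l) / (\<alpha> * (\<alpha> + N * l))"
    using \<alpha> \<alpha>N by (intro divide_right_mono) auto
  then have ab: "(2 * N - 2) * b \<le> a" unfolding a_def b_def using \<alpha>N by simp
  have inv: "matrix_inv (\<alpha> *\<^sub>R mat 1 + l *\<^sub>R ones_mat) = a *\<^sub>R mat 1 - b *\<^sub>R (ones_mat :: real^'n^'n)"
    unfolding a_def b_def N_def using \<alpha> \<alpha>N by (intro inverse_identity_plus_ones) (simp_all add: N_def)
  show ?thesis
    using sandwich_row_excess_pos[OF _ b _ assms(4-7)] N ab
    unfolding Let_def inv row_excess_def N_def by simp
qed

end
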